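(* Let $p$ be a prime and $G=S^1\times C_p$. Then $G$ is not a BU-group of type II: there exist fixed-point-free orthogonal $G$-representations $V,W$ with $\dim V=\dim W$ and a $G$-map $f:S(V)\to S(W)$ with $\deg f=0$.
   Context: An orthogonal $G$-representation $V$ is fixed-point-free if $V^G=0$; $S(V)$ denotes its unit sphere, and a $G$-map is a continuous $G$-equivariant map. $G$ is a BU-group of type II if for all fixed-point-free orthogonal $G$-representations $V,W$ with $\dim V=\dim W$, every $G$-map $f:S(V)\to S(W)$ has $\deg f\neq 0$. *)

theory Defs
  imports "HOL-Analysis.Analysis" "HOL-Homology.Homology"
begin

definition Gcar :: "nat \<Rightarrow> (complex \<times> nat) set" where
  "Gcar p = {(z, k). cmod z = 1 \<and> k < p}"

definition Gmul :: "nat \<Rightarrow> complex \<times> nat \<Rightarrow> complex \<times> nat \<Rightarrow> complex \<times> nat" where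
  "Gmul p g h = (fst g * fst h, (snd g + snd h) mod p)"

text \<open>Linear action of an (n+1)x(n+1) matrix (indices 0..n) on R^(n+1),
  the latter realised as functions nat => real vanishing above n
  (the carrier of Euclidean_space (Suc n)).\<close>
definition mat_act :: "nat \<Rightarrow> (nat \<Rightarrow> nat \<Rightarrow> real) \<Rightarrow> (nat \<Rightarrow> real) \<Rightarrow> nat \<Rightarrow> real" where
  "mat_act n A x = (\<lambda>i. if i \<le> n then (\<Sum>j\<le>n. A i j * x j) else 0)"

definition orth_rep :: "nat \<Rightarrow> nat \<Rightarrow> (complex \<times> nat \<Rightarrow> nat \<Rightarrow> nat \<Rightarrow> real) \<Rightarrow> bool" where
  "orth_rep p n M \<longleftrightarrow>
     (\<forall>g\<in>Gcar p. \<forall>i\<le>n. \<forall>j\<le>n. (\<Sum>k\<le>n. M g k i * M g k j) = (if i = j then 1 else 0)) \<and>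
     (\<forall>i\<le>n. \<forall>j\<le>n. M (1, 0) i j = (if i = j then 1 else 0)) \<and>
     (\<forall>g\<in>Gcar p. \<forall>h\<in>Gcar p. \<forall>i\<le>n. \<forall>j\<le>n.
        M (Gmul p g h) i j = (\<Sum>k\<le>n. M g i k * M h k j)) \<and>
     (\<forall>k<p. \<forall>i\<le>n. \<forall>j\<le>n. continuous_on (sphere 0 1) (\<lambda>z. M (z, k) i j))"

definition fixed_point_free :: "nat \<Rightarrow> nat \<Rightarrow> (complex \<times> nat \<Rightarrow> nat \<Rightarrow> nat \<Rightarrow> real) \<Rightarrow> bool" where
  "fixed_point_free p n M \<longleftrightarrow>
     (\<forall>x. (\<forall>i>n. x i = 0) \<and> (\<forall>g\<in>Gcar p. mat_act n (M g) x = x) \<longrightarrow> (\<forall>i. x i = 0))"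

text \<open>A G-map S(V) -> S(W), with V, W both of dimension n+1, so S(V), S(W)
  are the n-sphere nsphere n.\<close>
definition G_map :: "nat \<Rightarrow> nat \<Rightarrow> (complex \<times> nat \<Rightarrow> nat \<Rightarrow> nat \<Rightarrow> real)
    \<Rightarrow> (complex \<times> nat \<Rightarrow> nat \<Rightarrow> nat \<Rightarrow> real) \<Rightarrow> ((nat \<Rightarrow> real) \<Rightarrow> nat \<Rightarrow> real) \<Rightarrow> bool" where
  "G_map p n M N f \<longleftrightarrow>
     continuous_map (nsphere n) (nsphere n) f \<and>
     (\<forall>g\<in>Gcar p. \<forall>x\<in>topspace (nsphere n). f (mat_act n (M g) x) = mat_act n (N g) (f x))"

end

theory Submission
  imports Defs
begin

text \<open>Write C(a,b) for the complex line on which (z, k) acts by z^a * zeta^(b*k), where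
  zeta = exp(2 pi i / p). Take V = C(0,1) + C(1,1) + C(1,2) and W = C(0,1) + C(0,1) + C(p,0);
  as p > 1, no summand is trivial, so both are fixed-point-free. The polynomial map
  phi(x0, x1, x2) = (x0, cnj x1 * x2, x1^p + x2^p) is equivariant and vanishes only at the origin,
  so phi/|phi| is a G-map S(V) -> S(W). It misses (0, 1, 0): cnj x1 * x2 > 0 forces x2 = s * x1
  with s > 0, and then x1^p + x2^p = (1 + s^p) * x1^p is not zero. A non-surjective self-map of a
  sphere has degree zero.\<close>

section \<open>Orthogonal matrices and normalisation onto spheres\<close>

definition orthonormal_cols :: "nat \<Rightarrow> (nat \<Rightarrow> nat \<Rightarrow> real) \<Rightarrow> bool" where
  "orthonormal_cols n A \<longleftrightarrow>
     (\<forall>i\<le>n. \<forall>j\<le>n. (\<Sum>k\<le>n. A k i * A k j) = (if i = j then 1 else 0))"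

lemma sum_squares_mat_act:
  assumes "orthonormal_cols n A"
  shows "(\<Sum>i\<le>n. mat_act n A x i ^ 2) = (\<Sum>i\<le>n. x i ^ 2)"
proof -
  have "(\<Sum>i\<le>n. mat_act n A x i ^ 2)
      = (\<Sum>i\<le>n. \<Sum>j\<le>n. \<Sum>k\<le>n. A i j * A i k * (x j * x k))"
    by (simp add: mat_act_def power2_eq_square sum_product mult_ac)
  also have "\<dots> = (\<Sum>j\<le>n. \<Sum>i\<le>n. \<Sum>k\<le>n. A i j * A i k * (x j * x k))"
    by (rule sum.swap)
  also have "\<dots> = (\<Sum>j\<le>n. \<Sum>k\<le>n. (\<Sum>i\<le>n. A i j * A i k) * (x j * x k))"
    by (rule sum.cong[OF refl], subst sum.swap) (simp add: sum_distrib_right)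
  also have "\<dots> = (\<Sum>j\<le>n. \<Sum>k\<le>n. if j = k then x j * x k else 0)"
    using assms by (intro sum.cong refl) (simp add: orthonormal_cols_def)
  also have "\<dots> = (\<Sum>j\<le>n. x j ^ 2)"
    by (simp add: power2_eq_square)
  finally show ?thesis .
qed

lemma mat_act_divide: "mat_act n A (\<lambda>i. x i / c) = (\<lambda>i. mat_act n A x i / c)"
  unfolding mat_act_def by (rule ext) (simp add: sum_divide_distrib)

definition sphere_normalize :: "nat \<Rightarrow> (nat \<Rightarrow> real) \<Rightarrow> nat \<Rightarrow> real" where
  "sphere_normalize n y = (\<lambda>i. y i / sqrt (\<Sum>k\<le>n. y k ^ 2))"

lemma sphere_normalize_mat_act:
  assumes "orthonormal_cols n A"
  shows "sphere_normalize n (mat_act n A y) = mat_act n A (sphere_normalize n y)"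
proof -
  have "(\<Sum>k\<le>n. mat_act n A y k ^ 2) = (\<Sum>k\<le>n. y k ^ 2)"
    by (rule sum_squares_mat_act[OF assms])
  then show ?thesis
    unfolding sphere_normalize_def mat_act_divide by simp
qed

lemma nsphere_eq_top_of_set:
  "nsphere n = top_of_set {x. (\<Sum>i\<le>n. x i ^ 2) = 1 \<and> (\<forall>i>n. x i = 0)}"
  by (simp add: nsphere euclidean_product_topology)

lemma topspace_nsphere:
  "topspace (nsphere n) = {x. (\<Sum>i\<le>n. x i ^ 2) = 1 \<and> (\<forall>i>n. x i = 0)}"
  by (simp add: nsphere_eq_top_of_set)

lemma sum_squares_pos:
  fixes y :: "nat \<Rightarrow> real"
  assumes "\<And>i. n < i \<Longrightarrow> y i = 0" "y \<noteq> (\<lambda>_. 0)"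
  shows "0 < (\<Sum>k\<le>n. y k ^ 2)"
proof -
  obtain i where i: "y i \<noteq> 0" using assms(2) by (auto simp: fun_eq_iff)
  then have "i \<le> n" using assms(1) leI by blast
  moreover have "0 < y i ^ 2" using i by simp
  ultimately show ?thesis by (intro sum_pos2[of "{..n}" i]) auto
qed

lemma sphere_normalize_rescale:
  "(\<Sum>k\<le>n. y k ^ 2) \<noteq> 0 \<Longrightarrow> (\<lambda>i. sqrt (\<Sum>k\<le>n. y k ^ 2) * sphere_normalize n y i) = y"
  by (simp add: sphere_normalize_def)

lemma continuous_map_nsphere_normalize:
  assumes cont: "continuous_on (topspace (nsphere n)) h"
    and vanish: "\<And>x i. x \<in> topspace (nsphere n) \<Longrightarrow> n < i \<Longrightarrow> h x i = 0"
    and nonzero: "\<And>x. x \<in> topspace (nsphere n) \<Longrightarrow> h x \<noteq> (\<lambda>_. 0)"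
  shows "continuous_map (nsphere n) (nsphere n) (\<lambda>x. sphere_normalize n (h x))"
proof -
  let ?S = "{x. (\<Sum>i\<le>n. x i ^ 2) = 1 \<and> (\<forall>i>n. x i = 0)}"
  have pos: "0 < (\<Sum>k\<le>n. h x k ^ 2)" if "x \<in> ?S" for x
    using that vanish nonzero by (simp add: topspace_nsphere sum_squares_pos)
  have coord: "continuous_on ?S (\<lambda>x. h x i)" for i
    using continuous_on_product_then_coordinatewise[OF cont] by (simp add: topspace_nsphere)
  have "continuous_on ?S (\<lambda>x. h x i / sqrt (\<Sum>k\<le>n. h x k ^ 2))" for i
    using pos by (intro continuous_intros coord) force
  then have continuous: "continuous_on ?S (\<lambda>x. sphere_normalize n (h x))"
    unfolding sphere_normalize_def by (rule continuous_on_coordinatewise_then_product)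
  have maps_to: "sphere_normalize n (h x) \<in> ?S" if x: "x \<in> ?S" for x
  proof -
    have "(\<Sum>i\<le>n. (h x i / sqrt (\<Sum>k\<le>n. h x k ^ 2)) ^ 2) = 1"
      using pos[OF x] by (simp add: power_divide flip: sum_divide_distrib)
    moreover have "h x i = 0" if "n < i" for i
      using vanish x that by (simp add: topspace_nsphere)
    ultimately show ?thesis by (simp add: sphere_normalize_def)
  qed
  have "continuous_map (top_of_set ?S) (top_of_set ?S) (\<lambda>x. sphere_normalize n (h x))"
    unfolding continuous_map_subtopology_eu using continuous maps_to by (intro conjI funcsetI)
  then show ?thesis
    by (simp only: nsphere_eq_top_of_set)
qed

section \<open>Complex coordinates on even-dimensional spaces\<close>

definition toC :: "(nat \<Rightarrow> real) \<Rightarrow> nat \<Rightarrow> complex" where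
  "toC x j = Complex (x (2 * j)) (x (2 * j + 1))"

definition fromC :: "nat \<Rightarrow> (nat \<Rightarrow> complex) \<Rightarrow> nat \<Rightarrow> real" where
  "fromC n Y i = (if i \<le> n then if even i then Re (Y (i div 2)) else Im (Y (i div 2)) else 0)"

text \<open>The real matrix of the complex diagonal matrix diag(c) in the coordinates of toC.\<close>

definition realified_diag :: "(nat \<Rightarrow> complex) \<Rightarrow> nat \<Rightarrow> nat \<Rightarrow> real" where
  "realified_diag c i j =
     (if i div 2 = j div 2 then
        if even i then (if even j then Re (c (i div 2)) else - Im (c (i div 2)))
        else (if even j then Im (c (i div 2)) else Re (c (i div 2)))
      else 0)"

lemma nat_parity_cases:
  fixes i :: nat
  obtains (even) d where "i = 2 * d" | (odd) d where "i = 2 * d + 1"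
  by (metis evenE oddE)

lemma sum_atMost_block:
  fixes n d :: nat
  assumes "2 * d + 1 \<le> n" "\<And>j. j div 2 \<noteq> d \<Longrightarrow> f j = 0"
  shows "(\<Sum>j\<le>n. f j) = f (2 * d) + f (2 * d + 1)"
proof -
  have block: "j = 2 * d \<or> j = 2 * d + 1" if "j div 2 = d" for j
    using that by presburger
  have "(\<Sum>j\<le>n. f j) = (\<Sum>j\<in>{2 * d, 2 * d + 1}. f j)"
    using assms block by (intro sum.mono_neutral_right) auto
  then show ?thesis by simp
qed

lemma toC_fromC:
  assumes "odd n" "j \<le> n div 2"
  shows "toC (fromC n Y) j = Y j"
proof -
  have "2 * j + 1 \<le> n" using assms by presburger
  then show ?thesis by (simp add: toC_def fromC_def complex_eq_iff)
qed

lemma fromC_toC: "(\<And>i. n < i \<Longrightarrow> x i = 0) \<Longrightarrow> fromC n (toC x) = x"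
  by (rule ext) (auto simp: fromC_def toC_def odd_two_times_div_two_succ intro: leI)

lemma fromC_eq_iff: "odd n \<Longrightarrow> fromC n Y = fromC n Z \<longleftrightarrow> (\<forall>j\<le>n div 2. Y j = Z j)"
  by (metis (no_types, lifting) fromC_def toC_fromC div_le_mono ext)

lemma fromC_of_real_mult: "fromC n (\<lambda>j. of_real s * Y j) = (\<lambda>i. s * fromC n Y i)"
  by (rule ext) (simp add: fromC_def)

lemma double_half_Suc_le: "odd n \<Longrightarrow> (i::nat) \<le> n \<Longrightarrow> 2 * (i div 2) + 1 \<le> n"
  by presburger

lemma mat_act_realified_diag:
  assumes "odd n"
  shows "mat_act n (realified_diag c) x = fromC n (\<lambda>j. c j * toC x j)"
proof (rule ext)
  fix i
  show "mat_act n (realified_diag c) x i = fromC n (\<lambda>j. c j * toC x j) i"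
  proof (cases "i \<le> n")
    case True
    have sum: "mat_act n (realified_diag c) x i
        = realified_diag c i (2 * (i div 2)) * x (2 * (i div 2))
          + realified_diag c i (2 * (i div 2) + 1) * x (2 * (i div 2) + 1)"
      unfolding mat_act_def using True
      by (subst sum_atMost_block[OF double_half_Suc_le[OF assms True]]) (simp_all add: realified_diag_def)
    show ?thesis
      using True sum by (cases i rule: nat_parity_cases) (simp_all add: fromC_def toC_def realified_diag_def)
  qed (simp add: mat_act_def fromC_def)
qed

lemma orthonormal_cols_realified_diag:
  assumes "odd n" and unit: "\<And>j. j \<le> n div 2 \<Longrightarrow> cmod (c j) = 1"
  shows "orthonormal_cols n (realified_diag c)"
  unfolding orthonormal_cols_def
proof (intro allI impI)
  fix i j assume ij: "i \<le> n" "j \<le> n"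
  have "Re (c (i div 2)) ^ 2 + Im (c (i div 2)) ^ 2 = 1"
    using unit[of "i div 2"] ij by (simp add: div_le_mono flip: cmod_power2)
  then have sq: "Re (c (i div 2)) * Re (c (i div 2)) + Im (c (i div 2)) * Im (c (i div 2)) = 1"
    by (simp add: power2_eq_square)
  have "(\<Sum>k\<le>n. realified_diag c k i * realified_diag c k j)
      = realified_diag c (2 * (i div 2)) i * realified_diag c (2 * (i div 2)) j
        + realified_diag c (2 * (i div 2) + 1) i * realified_diag c (2 * (i div 2) + 1) j"
    by (rule sum_atMost_block[OF double_half_Suc_le[OF assms(1) ij(1)]]) (simp add: realified_diag_def)
  also have "\<dots> = (if i = j then 1 else 0)"
    using sq by (cases i rule: nat_parity_cases; cases j rule: nat_parity_cases)
      (auto simp: realified_diag_def algebra_simps)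
  finally show "(\<Sum>k\<le>n. realified_diag c k i * realified_diag c k j) = (if i = j then 1 else 0)" .
qed

lemma realified_diag_mult:
  assumes "odd n" "i \<le> n"
  shows "realified_diag (\<lambda>k. a k * b k) i j = (\<Sum>k\<le>n. realified_diag a i k * realified_diag b k j)"
  by (subst sum_atMost_block[OF double_half_Suc_le[OF assms]],
      simp add: realified_diag_def,
      cases i rule: nat_parity_cases; cases j rule: nat_parity_cases)
    (auto simp: realified_diag_def)

lemma realified_diag_1: "realified_diag (\<lambda>_. 1) i j = (if i = j then 1 else 0)"
  by (cases i rule: nat_parity_cases; cases j rule: nat_parity_cases) (auto simp: realified_diag_def)

lemma realified_diag_cong:
  assumes "c (i div 2) = d (i div 2)"
  shows "realified_diag c i j = realified_diag d i j"
  unfolding realified_diag_def by (simp only: assms)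

lemma continuous_on_toC [continuous_intros]: "continuous_on A (\<lambda>x. toC x j)"
  unfolding toC_def
  by (intro continuous_intros continuous_on_subset[OF continuous_on_product_coordinates]) simp_all

lemma continuous_on_fromC:
  assumes "\<And>j. continuous_on A (\<lambda>x. Y x j)"
  shows "continuous_on A (\<lambda>x. fromC n (Y x))"
  unfolding fromC_def
proof (rule continuous_on_coordinatewise_then_product)
  fix i
  show "continuous_on A (\<lambda>x. if i \<le> n then if even i then Re (Y x (i div 2)) else Im (Y x (i div 2)) else 0)"
    by (cases "i \<le> n"; cases "even i"; simp; intro continuous_intros assms)
qed

lemma fromC_eq_0_iff: "odd n \<Longrightarrow> fromC n Y = (\<lambda>_. 0) \<longleftrightarrow> (\<forall>j\<le>n div 2. Y j = 0)"
proof -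
  assume "odd n"
  moreover have "fromC n (\<lambda>_. 0) = (\<lambda>_. 0)" by (simp add: fromC_def fun_eq_iff)
  ultimately show ?thesis by (metis fromC_eq_iff)
qed

lemma toC_nsphere_ne_0:
  assumes "odd n" "x \<in> topspace (nsphere n)"
  obtains j where "j \<le> n div 2" "toC x j \<noteq> 0"
proof -
  have "fromC n (toC x) = x" using assms(2) by (simp add: topspace_nsphere fromC_toC)
  moreover have "x \<noteq> (\<lambda>_. 0)" using assms(2) by (auto simp: topspace_nsphere)
  ultimately show ?thesis using that fromC_eq_0_iff[OF assms(1), of "toC x"] by auto
qed

lemma orth_rep_realified_diag:
  assumes "odd n"
    and unit: "\<And>g j. g \<in> Gcar p \<Longrightarrow> cmod (c g j) = 1"
    and one: "\<And>j. c (1, 0) j = 1"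
    and mult: "\<And>g h j. g \<in> Gcar p \<Longrightarrow> h \<in> Gcar p \<Longrightarrow> c (Gmul p g h) j = c g j * c h j"
    and cont: "\<And>k j. continuous_on (sphere 0 1) (\<lambda>z. c (z, k) j)"
  shows "orth_rep p n (\<lambda>g. realified_diag (c g))"
  unfolding orth_rep_def
proof (intro conjI ballI allI impI)
  fix g i j assume "g \<in> Gcar p" "i \<le> n" "j \<le> n"
  then show "(\<Sum>k\<le>n. realified_diag (c g) k i * realified_diag (c g) k j) = (if i = j then 1 else 0)"
    using orthonormal_cols_realified_diag[OF assms(1), of "c g"] unit by (simp add: orthonormal_cols_def)
next
  fix i j :: nat
  show "realified_diag (c (1, 0)) i j = (if i = j then 1 else 0)"
    using realified_diag_cong[of "c (1, 0)" i "\<lambda>_. 1" j] one realified_diag_1 by simp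
next
  fix g h i j assume "g \<in> Gcar p" "h \<in> Gcar p" "i \<le> n"
  then show "realified_diag (c (Gmul p g h)) i j
      = (\<Sum>k\<le>n. realified_diag (c g) i k * realified_diag (c h) k j)"
    using realified_diag_cong[of "c (Gmul p g h)" i "\<lambda>k. c g k * c h k" j] mult
      realified_diag_mult[OF assms(1)] by simp
next
  fix k i j :: nat
  show "continuous_on (sphere 0 1) (\<lambda>z. realified_diag (c (z, k)) i j)"
    by (cases "i div 2 = j div 2"; cases "even i"; cases "even j";
        simp add: realified_diag_def; intro continuous_intros cont)
qed

lemma fixed_point_free_realified_diag:
  assumes "odd n" and nontrivial: "\<And>j. j \<le> n div 2 \<Longrightarrow> \<exists>g\<in>Gcar p. c g j \<noteq> 1"
  shows "fixed_point_free p n (\<lambda>g. realified_diag (c g))"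
  unfolding fixed_point_free_def
proof (intro allI impI)
  fix x :: "nat \<Rightarrow> real"
  assume x: "(\<forall>i>n. x i = 0) \<and> (\<forall>g\<in>Gcar p. mat_act n (realified_diag (c g)) x = x)"
  then have x_eq: "fromC n (toC x) = x" by (simp add: fromC_toC)
  have "toC x j = 0" if j: "j \<le> n div 2" for j
  proof -
    obtain g where g: "g \<in> Gcar p" "c g j \<noteq> 1" using nontrivial[OF j] by blast
    have "fromC n (\<lambda>j. c g j * toC x j) = mat_act n (realified_diag (c g)) x"
      by (simp add: mat_act_realified_diag[OF assms(1)])
    also have "\<dots> = x" using x g(1) by blast
    also have "\<dots> = fromC n (toC x)" using x_eq by (rule sym)
    finally have "\<forall>k\<le>n div 2. c g k * toC x k = toC x k"
      by (simp only: fromC_eq_iff[OF assms(1)])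
    then have "c g j * toC x j = toC x j" using j by blast
    then show ?thesis using g(2) by simp
  qed
  then have "fromC n (toC x) = fromC n (\<lambda>_. 0)" by (simp add: fromC_eq_iff[OF assms(1)])
  then have "x = fromC n (\<lambda>_. 0)" by (simp only: x_eq)
  then show "x i = 0" for i by (simp add: fromC_def)
qed

section \<open>Characters of S^1 x C_p\<close>

definition zeta :: "nat \<Rightarrow> complex" where
  "zeta p = cis (2 * pi / p)"

definition character :: "nat \<Rightarrow> nat \<times> nat \<Rightarrow> complex \<times> nat \<Rightarrow> complex" where
  "character p w g = fst g ^ fst w * zeta p ^ (snd w * snd g)"

lemma zeta_pow_mod:
  assumes "0 < p"
  shows "zeta p ^ (m mod p) = zeta p ^ m"
proof -
  have "zeta p ^ p = 1" using assms unfolding zeta_def Complex.DeMoivre by simp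
  have "zeta p ^ m = zeta p ^ (p * (m div p) + m mod p)" by simp
  also have "\<dots> = (zeta p ^ p) ^ (m div p) * zeta p ^ (m mod p)"
    by (simp only: power_add power_mult)
  also have "\<dots> = zeta p ^ (m mod p)" using \<open>zeta p ^ p = 1\<close> by simp
  finally show ?thesis by (rule sym)
qed

lemma norm_character: "g \<in> Gcar p \<Longrightarrow> cmod (character p w g) = 1"
  by (auto simp: character_def Gcar_def zeta_def norm_mult norm_power)

lemma character_1: "character p w (1, 0) = 1"
  by (simp add: character_def)

lemma character_Gmul:
  assumes "0 < p"
  shows "character p w (Gmul p g h) = character p w g * character p w h"
proof -
  have "zeta p ^ (snd w * ((snd g + snd h) mod p)) = (zeta p ^ ((snd g + snd h) mod p)) ^ snd w"
    by (metis mult.commute power_mult)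
  also have "\<dots> = zeta p ^ (snd w * snd g) * zeta p ^ (snd w * snd h)"
    by (simp only: zeta_pow_mod[OF assms] power_add power_mult_distrib mult.commute
        flip: power_mult)
  finally show ?thesis
    by (simp add: character_def Gmul_def power_mult_distrib mult_ac)
qed

lemma continuous_on_character: "continuous_on A (\<lambda>z. character p w (z, k))"
  unfolding character_def by (simp add: continuous_intros)

lemma zeta_pow_eq_1_imp_dvd:
  assumes "0 < p" "zeta p ^ b = 1"
  shows "p dvd b"
proof -
  have "cos (2 * pi * b / p) = 1"
    using arg_cong[OF assms(2), of Re] unfolding zeta_def Complex.DeMoivre by (simp add: mult.commute)
  then obtain m :: int where "2 * pi * b / p = m * 2 * pi" by (auto simp: cos_one_2pi_int)
  then have "real b = real_of_int m * real p" using assms(1) by (simp add: field_simps)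
  then have "real_of_int (int b) = real_of_int (m * int p)" by simp
  then have "int b = int p * m" unfolding of_int_eq_iff by simp
  then have "int p dvd int b" by (rule dvdI)
  then show ?thesis by simp
qed

lemma character_nontrivial:
  assumes "0 < p" and w: "0 < fst w \<or> \<not> p dvd snd w"
  shows "\<exists>g\<in>Gcar p. character p w g \<noteq> 1"
proof (cases "0 < fst w")
  case True
  have "character p w (cis (pi / fst w), 0) = -1"
    using True by (simp add: character_def Complex.DeMoivre)
  then show ?thesis using assms(1) by (intro bexI[of _ "(cis (pi / fst w), 0)"]) (auto simp: Gcar_def)
next
  case False
  with w have not_dvd: "\<not> p dvd snd w" by simp
  then have "p \<noteq> 1" by auto
  with assms(1) have "1 < p" by linarith
  moreover have "character p w (1, 1) \<noteq> 1"
    using False not_dvd zeta_pow_eq_1_imp_dvd[OF assms(1), of "snd w"] by (auto simp: character_def)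
  ultimately show ?thesis by (intro bexI[of _ "(1, 1)"]) (simp_all add: Gcar_def)
qed

definition diag_rep :: "nat \<Rightarrow> (nat \<times> nat) list \<Rightarrow> complex \<times> nat \<Rightarrow> nat \<Rightarrow> nat \<Rightarrow> real" where
  "diag_rep p ws g = realified_diag (\<lambda>j. character p (ws ! j) g)"

lemma orth_rep_diag_rep: "0 < p \<Longrightarrow> ws \<noteq> [] \<Longrightarrow> orth_rep p (2 * length ws - 1) (diag_rep p ws)"
  unfolding diag_rep_def
  by (rule orth_rep_realified_diag)
    (simp_all add: norm_character character_1 character_Gmul continuous_on_character)

lemma fixed_point_free_diag_rep:
  assumes "0 < p" "ws \<noteq> []" "\<And>w. w \<in> set ws \<Longrightarrow> 0 < fst w \<or> \<not> p dvd snd w"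
  shows "fixed_point_free p (2 * length ws - 1) (diag_rep p ws)"
  unfolding diag_rep_def
proof (rule fixed_point_free_realified_diag)
  show "odd (2 * length ws - 1)" using assms(2) by simp
  fix j assume "j \<le> (2 * length ws - 1) div 2"
  then have "j < length ws" using assms(2) by (cases ws) auto
  then have "ws ! j \<in> set ws" by simp
  then show "\<exists>g\<in>Gcar p. character p (ws ! j) g \<noteq> 1"
    by (rule character_nontrivial[OF assms(1) assms(3)])
qed

lemma mat_act_diag_rep:
  "odd n \<Longrightarrow> mat_act n (diag_rep p ws g) x = fromC n (\<lambda>j. character p (ws ! j) g * toC x j)"
  by (simp add: diag_rep_def mat_act_realified_diag)

lemma orthonormal_cols_diag_rep: "odd n \<Longrightarrow> g \<in> Gcar p \<Longrightarrow> orthonormal_cols n (diag_rep p ws g)"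
  by (simp add: diag_rep_def orthonormal_cols_realified_diag norm_character)

section \<open>The equivariant map of degree zero\<close>

definition phi :: "nat \<Rightarrow> (nat \<Rightarrow> complex) \<Rightarrow> nat \<Rightarrow> complex" where
  "phi p Y j =
     (if j = 0 then Y 0 else if j = 1 then cnj (Y 1) * Y 2 else if j = 2 then Y 1 ^ p + Y 2 ^ p else 0)"

definition V_weights :: "(nat \<times> nat) list" where
  "V_weights = [(0, 1), (1, 1), (1, 2)]"

definition W_weights :: "nat \<Rightarrow> (nat \<times> nat) list" where
  "W_weights p = [(0, 1), (0, 1), (p, 0)]"

lemma phi_cong: "(\<And>j. j < 3 \<Longrightarrow> Y j = Z j) \<Longrightarrow> phi p Y = phi p Z"
  by (rule ext) (simp add: phi_def)

lemma continuous_on_phi: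
  "(\<And>j. continuous_on A (\<lambda>x. Y x j)) \<Longrightarrow> continuous_on A (\<lambda>x. phi p (Y x) j)"
  unfolding phi_def by (cases "j = 0"; cases "j = 1"; cases "j = 2"; simp; intro continuous_intros)

lemma cnj_mult_self_unit: "cmod u = 1 \<Longrightarrow> cnj u * u = 1"
  by (metis complex_norm_square mult.commute of_real_1 power_one)

lemma phi_equivariant:
  assumes "0 < p" "g \<in> Gcar p"
  shows "phi p (\<lambda>j. character p (V_weights ! j) g * Y j)
       = (\<lambda>j. character p (W_weights p ! j) g * phi p Y j)"
proof -
  obtain z k where g: "g = (z, k)" and z: "cmod z = 1" using assms(2) by (auto simp: Gcar_def)
  define w where "w = zeta p ^ k"
  have w: "cmod w = 1" by (simp add: w_def zeta_def norm_power)
  have "w ^ p = zeta p ^ ((k * p) mod p)"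
    unfolding zeta_pow_mod[OF assms(1)] w_def by (simp add: power_mult)
  then have wp: "w ^ p = 1" by simp
  have wp2: "(w ^ 2) ^ p = 1" by (metis power_mult mult.commute wp power_one)
  have char_g: "character p v g = z ^ fst v * w ^ snd v" for v
    by (simp add: character_def g w_def mult.commute flip: power_mult)
  have cnj_z: "cnj z * z = 1" and cnj_w: "cnj w * w = 1"
    using z w by (simp_all add: cnj_mult_self_unit)
  show ?thesis
  proof
    fix j :: nat
    consider "j = 0" | "j = 1" | "j = 2" | "2 < j" by linarith
    then show "phi p (\<lambda>j. character p (V_weights ! j) g * Y j) j
             = character p (W_weights p ! j) g * phi p Y j"
    proof cases
      case 2
      have "phi p (\<lambda>j. character p (V_weights ! j) g * Y j) 1 = cnj (z * w * Y 1) * (z * w ^ 2 * Y 2)"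
        by (simp add: phi_def V_weights_def char_g)
      also have "\<dots> = (cnj z * z) * (cnj w * w) * (w * (cnj (Y 1) * Y 2))"
        by (simp add: power2_eq_square mult_ac)
      also have "\<dots> = character p (W_weights p ! 1) g * phi p Y 1"
        by (simp add: cnj_z cnj_w W_weights_def char_g phi_def)
      finally show ?thesis using 2 by simp
    next
      case 3
      have "phi p (\<lambda>j. character p (V_weights ! j) g * Y j) 2 = (z * w * Y 1) ^ p + (z * w ^ 2 * Y 2) ^ p"
        by (simp add: phi_def V_weights_def char_g)
      also have "\<dots> = z ^ p * (Y 1 ^ p + Y 2 ^ p)"
        by (simp add: power_mult_distrib wp wp2 distrib_left)
      also have "\<dots> = character p (W_weights p ! 2) g * phi p Y 2"
        by (simp add: W_weights_def char_g phi_def)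
      finally show ?thesis using 3 by simp
    qed (simp_all add: phi_def V_weights_def W_weights_def char_g)
  qed
qed

lemma phi_eq_0_iff:
  assumes "0 < p"
  shows "phi p Y = (\<lambda>_. 0) \<longleftrightarrow> (\<forall>j<3. Y j = 0)"
proof
  assume "phi p Y = (\<lambda>_. 0)"
  then have "phi p Y 0 = 0" "phi p Y 1 = 0" "phi p Y 2 = 0" by simp_all
  then have Y0: "Y 0 = 0" and "cnj (Y 1) * Y 2 = 0" and pow: "Y 1 ^ p + Y 2 ^ p = 0"
    by (simp_all add: phi_def)
  then have "Y 1 = 0 \<or> Y 2 = 0" by simp
  then have "Y 1 = 0 \<and> Y 2 = 0" using pow assms by (auto simp: power_0_left)
  moreover have "j = 0 \<or> j = 1 \<or> j = 2" if "j < 3" for j :: nat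
    using that by auto
  ultimately show "\<forall>j<3. Y j = 0" using Y0 by blast
next
  assume "\<forall>j<3. Y j = 0"
  then show "phi p Y = (\<lambda>_. 0)" using assms by (simp add: phi_def fun_eq_iff)
qed

lemma cnj_mult_pos_imp_pow_sum_ne_0:
  fixes a b :: complex
  assumes "0 < t" "cnj a * b = of_real t"
  shows "a ^ p + b ^ p \<noteq> 0"
proof -
  have a: "a \<noteq> 0" using assms by auto
  define s where "s = t / cmod a ^ 2"
  have s: "0 < s" using assms(1) a by (simp add: s_def)
  have "of_real (cmod a ^ 2) * b = a * (cnj a * b)"
    by (simp only: complex_norm_square mult.assoc)
  then have "of_real (cmod a ^ 2) * b = of_real t * a" using assms(2) by simp
  then have b: "b = of_real s * a" using a by (simp add: s_def field_simps)
  have "a ^ p + b ^ p = of_real (1 + s ^ p) * a ^ p"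
    by (simp add: b power_mult_distrib distrib_right)
  moreover have "0 < 1 + s ^ p" using s by (simp add: add_pos_pos)
  then have "complex_of_real (1 + s ^ p) \<noteq> 0" by (simp only: of_real_eq_0_iff)
  ultimately show ?thesis using a by (metis mult_eq_0_iff power_eq_0_iff)
qed

definition phi_sphere :: "nat \<Rightarrow> (nat \<Rightarrow> real) \<Rightarrow> nat \<Rightarrow> real" where
  "phi_sphere p x = sphere_normalize 5 (fromC 5 (phi p (toC x)))"

lemma fromC_phi_ne_0:
  assumes "0 < p" "x \<in> topspace (nsphere 5)"
  shows "fromC 5 (phi p (toC x)) \<noteq> (\<lambda>_. 0)"
proof
  assume "fromC 5 (phi p (toC x)) = (\<lambda>_. 0)"
  then have low: "\<forall>j\<le>2. phi p (toC x) j = 0" using fromC_eq_0_iff[of 5] by simp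
  have "phi p (toC x) j = 0" for j
    using low by (cases "j \<le> 2") (auto simp: phi_def)
  then have "phi p (toC x) = (\<lambda>_. 0)" by blast
  then have "\<forall>j\<le>5 div 2. toC x j = 0" by (simp add: phi_eq_0_iff[OF assms(1)] less_Suc_eq_le)
  then show False by (metis toC_nsphere_ne_0[OF _ assms(2)] odd_numeral)
qed

lemma continuous_map_phi_sphere: "0 < p \<Longrightarrow> continuous_map (nsphere 5) (nsphere 5) (phi_sphere p)"
  unfolding phi_sphere_def
  by (rule continuous_map_nsphere_normalize)
    (auto simp: fromC_def fromC_phi_ne_0 intro!: continuous_on_fromC continuous_on_phi continuous_on_toC)

lemma phi_sphere_equivariant:
  assumes "0 < p" "g \<in> Gcar p"
  shows "phi_sphere p (mat_act 5 (diag_rep p V_weights g) x)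
       = mat_act 5 (diag_rep p (W_weights p) g) (phi_sphere p x)"
proof -
  have "phi p (toC (mat_act 5 (diag_rep p V_weights g) x))
      = phi p (\<lambda>j. character p (V_weights ! j) g * toC x j)"
    by (rule phi_cong) (simp add: mat_act_diag_rep toC_fromC)
  also have "\<dots> = (\<lambda>j. character p (W_weights p ! j) g * phi p (toC x) j)"
    by (rule phi_equivariant[OF assms])
  finally have "fromC 5 (phi p (toC (mat_act 5 (diag_rep p V_weights g) x)))
      = mat_act 5 (diag_rep p (W_weights p) g) (fromC 5 (phi p (toC x)))"
    by (simp add: mat_act_diag_rep fromC_eq_iff toC_fromC)
  then show ?thesis
    by (simp add: phi_sphere_def sphere_normalize_mat_act orthonormal_cols_diag_rep assms(2))
qed

lemma phi_sphere_not_surjective: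
  assumes "0 < p"
  shows "phi_sphere p ` topspace (nsphere 5) \<noteq> topspace (nsphere 5)"
proof -
  let ?e = "\<lambda>j. if j = 1 then 1 else 0 :: complex"
  have e: "fromC 5 ?e = (\<lambda>i. if i = 2 then 1 else 0)"
    by (auto simp: fromC_def fun_eq_iff)
  then have e_sphere: "fromC 5 ?e \<in> topspace (nsphere 5)"
    by (simp add: topspace_nsphere if_distrib [where f = "\<lambda>x. x ^ 2"] cong: if_cong)
  have "phi_sphere p x \<noteq> fromC 5 ?e" if x: "x \<in> topspace (nsphere 5)" for x
  proof
    assume hit: "phi_sphere p x = fromC 5 ?e"
    define y where "y = fromC 5 (phi p (toC x))"
    define s where "s = sqrt (\<Sum>k\<le>5. y k ^ 2)"
    have "0 < (\<Sum>k\<le>5. y k ^ 2)"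
      unfolding y_def by (rule sum_squares_pos[OF _ fromC_phi_ne_0[OF assms x]]) (simp add: fromC_def)
    then have s: "0 < s" by (simp add: s_def)
    have "y = (\<lambda>i. s * phi_sphere p x i)"
      using sphere_normalize_rescale[where n = 5 and y = y] s by (simp add: s_def phi_sphere_def y_def)
    also have "\<dots> = fromC 5 (\<lambda>j. of_real s * ?e j)"
      by (simp add: hit fromC_of_real_mult)
    finally have "phi p (toC x) 1 = of_real s" "phi p (toC x) 2 = 0"
      unfolding y_def fromC_eq_iff[OF odd_numeral] by auto
    then show False
      using cnj_mult_pos_imp_pow_sum_ne_0[OF s] by (simp add: phi_def)
  qed
  then show ?thesis using e_sphere by (metis imageE)
qed

theorem proposition4p1:
  fixes p :: nat
  assumes "prime p"
  shows "\<exists>n M N f. orth_rep p n M \<and> orth_rep p n N \<and>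
           fixed_point_free p n M \<and> fixed_point_free p n N \<and>
           G_map p n M N f \<and> Brouwer_degree2 n f = 0"
proof -
  have p: "0 < p" using assms prime_gt_0_nat by blast
  have not_dvd_1: "\<not> p dvd 1" using assms by auto
  have orth: "orth_rep p 5 (diag_rep p ws)" if "length ws = 3" for ws
    using orth_rep_diag_rep[OF p, of ws] that by (cases ws) auto
  have fpf: "fixed_point_free p 5 (diag_rep p ws)"
    if "length ws = 3" "\<forall>w\<in>set ws. 0 < fst w \<or> \<not> p dvd snd w" for ws
    using fixed_point_free_diag_rep[OF p, of ws] that by (cases ws) auto
  have "length V_weights = 3" "\<forall>w\<in>set V_weights. 0 < fst w \<or> \<not> p dvd snd w"
    "length (W_weights p) = 3" "\<forall>w\<in>set (W_weights p). 0 < fst w \<or> \<not> p dvd snd w"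
    using p not_dvd_1 by (simp_all add: V_weights_def W_weights_def)
  then have "orth_rep p 5 (diag_rep p V_weights)" "orth_rep p 5 (diag_rep p (W_weights p))"
    "fixed_point_free p 5 (diag_rep p V_weights)" "fixed_point_free p 5 (diag_rep p (W_weights p))"
    using orth fpf by simp_all
  moreover have "G_map p 5 (diag_rep p V_weights) (diag_rep p (W_weights p)) (phi_sphere p)"
    unfolding G_map_def using continuous_map_phi_sphere[OF p] phi_sphere_equivariant[OF p] by blast
  moreover have "Brouwer_degree2 5 (phi_sphere p) = 0"
    by (rule Brouwer_degree2_nonsurjective[OF continuous_map_phi_sphere[OF p] phi_sphere_not_surjective[OF p]])
  ultimately show ?thesis by blast
qed

end
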